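(* Let $T$ be a normal spanning tree of a connected graph $G$ with $n$ vertices and $m$ edges. Let $r,s\in\mathbb{I}^{m-n+1}$ with $r\ne s$, and suppose there exist $\Phi=(G,\varphi)\in\mathcal{A}_T(r)$ and $\Psi=(G,\psi)\in\mathcal{A}_T(s)$ such that $\Re(\varphi(C))=\Re(\psi(C))$ for every cycle $C$ of $G$. Then $\mathcal{A}_T(r)$ and $\mathcal{A}_T(s)$ are $\mathbb{T}$-cospectral, i.e. all $\mathbb{T}$-gain graphs in $\mathcal{A}_T(r)\cup\mathcal{A}_T(s)$ have adjacency matrices with the same spectrum.
   Context: Graphs are finite, simple and undirected. $\mathbb{T}=\{z\in\mathbb{C}:|z|=1\}$, $\mathbb{I}=[0,2\pi)$. A $\mathbb{T}$-gain on $G$ is a map $\varphi$ from oriented edges to $\mathbb{T}$ with $\varphi(\overrightarrow{e_{ts}})=\varphi(\overrightarrow{e_{st}})^{-1}$; $A(\Phi)$ for $\Phi=(G,\varphi)$ is the Hermitian matrix with $(s,t)$ entry $\varphi(\overrightarrow{e_{st}})$ if $v_s\sim v_t$, else $0$; $\mathcal{T}_G$ is the set of all $\mathbb{T}$-gain graphs on $G$. The gain of a directed cycle is the product of gains of its oriented edges; the two directions of a cycle $C$ have conjugate gains, so $\Re(\varphi(C))$ is well defined. A rooted spanning tree $T$ with root $v_r$ induces the tree order ($v_x\le v_y$ iff $v_x$ is on the $T$-path from $v_r$ to $v_y$); $T$ is normal if adjacent vertices of $G$ are always comparable. The suitably oriented graph $\overrightarrow{G_T}$ orients each edge $e_{st}$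 with $v_s\le v_t$ as $\overrightarrow{e_{st}}$ if $e_{st}\in E(T)$ and as $\overrightarrow{e_{ts}}$ otherwise; the $m-n+1$ fundamental cycles of $T$ become directed cycles $\overrightarrow{C_j(T)}$. For $r=(c_1,\dots,c_{m-n+1})\in\mathbb{I}^{m-n+1}$, $\mathcal{A}_T(r)=\{(G,\varphi)\in\mathcal{T}_G:\varphi(\overrightarrow{C_j(T)})=e^{ic_j}\ \forall j\}$. *)

theory Defs
  imports "Jordan_Normal_Form.Char_Poly"
begin

text \<open>Graphs: vertex set {0..<n} (vertex v_s is s), edge set E of 2-element subsets.\<close>

definition simple_graph :: "nat \<Rightarrow> nat set set \<Rightarrow> bool" where
  "simple_graph n E \<longleftrightarrow> (\<forall>e\<in>E. \<exists>u v. u \<noteq> v \<and> u < n \<and> v < n \<and> e = {u, v})"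

definition is_path :: "nat set set \<Rightarrow> nat list \<Rightarrow> bool" where
  "is_path F xs \<longleftrightarrow> xs \<noteq> [] \<and> distinct xs \<and> (\<forall>i. Suc i < length xs \<longrightarrow> {xs ! i, xs ! Suc i} \<in> F)"

definition is_cycle :: "nat set set \<Rightarrow> nat list \<Rightarrow> bool" where
  "is_cycle F xs \<longleftrightarrow> length xs \<ge> 3 \<and> is_path F xs \<and> {last xs, hd xs} \<in> F"

definition connected_on :: "nat \<Rightarrow> nat set set \<Rightarrow> bool" where
  "connected_on n F \<longleftrightarrow> (\<forall>u<n. \<forall>v<n. \<exists>xs. is_path F xs \<and> hd xs = u \<and> last xs = v)"

definition spanning_tree :: "nat \<Rightarrow> nat set set \<Rightarrow> nat set set \<Rightarrow> bool" where
  "spanning_tree n E ET \<longleftrightarrow> ET \<subseteq> E \<and> connected_on n ET \<and> (\<nexists>xs. is_cycle ET xs)"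

definition tree_le :: "nat set set \<Rightarrow> nat \<Rightarrow> nat \<Rightarrow> nat \<Rightarrow> bool" where
  "tree_le ET rt x y \<longleftrightarrow> (\<exists>xs. is_path ET xs \<and> hd xs = rt \<and> last xs = y \<and> x \<in> set xs)"

definition normal_spanning_tree :: "nat \<Rightarrow> nat set set \<Rightarrow> nat set set \<Rightarrow> nat \<Rightarrow> bool" where
  "normal_spanning_tree n E ET rt \<longleftrightarrow> spanning_tree n E ET \<and> rt < n \<and>
     (\<forall>u v. {u, v} \<in> E \<longrightarrow> tree_le ET rt u v \<or> tree_le ET rt v u)"

text \<open>T-gain graphs on G: phi s t is the gain of the oriented edge e_st.\<close>
definition gain :: "nat set set \<Rightarrow> (nat \<Rightarrow> nat \<Rightarrow> complex) \<Rightarrow> bool" where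
  "gain E \<phi> \<longleftrightarrow> (\<forall>s t. {s, t} \<in> E \<longrightarrow> cmod (\<phi> s t) = 1 \<and> \<phi> t s = inverse (\<phi> s t))"

definition gain_adj_mat :: "nat \<Rightarrow> nat set set \<Rightarrow> (nat \<Rightarrow> nat \<Rightarrow> complex) \<Rightarrow> complex mat" where
  "gain_adj_mat n E \<phi> = mat n n (\<lambda>(s, t). if {s, t} \<in> E then \<phi> s t else 0)"

definition cycle_gain :: "(nat \<Rightarrow> nat \<Rightarrow> complex) \<Rightarrow> nat list \<Rightarrow> complex" where
  "cycle_gain \<phi> xs = (\<Prod>i<length xs. \<phi> (xs ! i) (xs ! ((Suc i) mod length xs)))"

text \<open>Fundamental cycle of the non-tree edge {s,t} with s < t in the tree order, directed as in the
  suitably oriented graph: down the T-path from s to t along tree edges, then back along e_ts.\<close>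
definition fund_cycle :: "nat set set \<Rightarrow> nat \<Rightarrow> nat set \<Rightarrow> nat list" where
  "fund_cycle ET rt e = (THE xs. is_path ET xs \<and> {hd xs, last xs} = e \<and> tree_le ET rt (hd xs) (last xs))"

text \<open>A_T(r): the parameter r assigns to each fundamental cycle (indexed by its non-tree edge) a
  value in I = [0,2pi).\<close>
definition A_T :: "nat set set \<Rightarrow> nat set set \<Rightarrow> nat \<Rightarrow> (nat set \<Rightarrow> real) \<Rightarrow> (nat \<Rightarrow> nat \<Rightarrow> complex) set" where
  "A_T E ET rt r = {\<phi>. gain E \<phi> \<and>
      (\<forall>e \<in> E - ET. cycle_gain \<phi> (fund_cycle ET rt e) = exp (\<i> * complex_of_real (r e)))}"

text \<open>Same spectrum: same size and every eigenvalue has the same (algebraic) multiplicity.\<close>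
definition same_spectrum :: "complex mat \<Rightarrow> complex mat \<Rightarrow> bool" where
  "same_spectrum A B \<longleftrightarrow> dim_row A = dim_row B \<and>
     (\<forall>z. order z (char_poly A) = order z (char_poly B))"

end

(*
  Two gain functions whose gains agree on the fundamental cycles of a normal spanning tree T with
  root rt are switching equivalent.  The quotient of their gains along the T-path from rt to v is a
  vertex potential h with phi' u v * h u = phi u v * h v on every edge uv: the endpoints of an edge
  are comparable in the tree order, so the T-path to the upper endpoint runs through the lower one,
  and the remaining segment is either the edge itself or closes up with it to the fundamental cycle
  of uv.  Switching does not change cycle gains, so every member of A_T(r) has the cycle gains of phi
  and every member of A_T(s) those of psi.

  Expanding det (x I - A) by permutations and splitting off the cycle of a permutation through a
  fixed vertex, each cyclic permutation can be paired with its inverse.  For a Hermitian matrix the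
  two products are complex conjugate, so the characteristic polynomial of a gain graph only depends
  on the real parts of the products along cyclic permutations; these vanish off the cycles of G,
  equal 1 on single edges and are the real parts of the cycle gains otherwise.
*)

theory Submission
  imports Defs "HOL-Combinatorics.Orbits"
begin

section \<open>Paths and cycles\<close>

lemma is_path_altdef:
  "is_path F xs \<longleftrightarrow> xs \<noteq> [] \<and> distinct xs \<and> successively (\<lambda>x y. {x, y} \<in> F) xs"
  unfolding is_path_def successively_conv_nth ..

lemma is_path_appendD:
  assumes "is_path F (xs @ ys)"
  shows "xs \<noteq> [] \<Longrightarrow> is_path F xs" and "ys \<noteq> [] \<Longrightarrow> is_path F ys"
  using assms by (auto simp: is_path_altdef successively_append_iff)

lemma is_path_join:
  assumes "is_path F (xs @ [y])" and "is_path F (y # ys)" and "set xs \<inter> set ys = {}"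
  shows "is_path F (xs @ y # ys)"
proof -
  have "successively (\<lambda>x y. {x, y} \<in> F) ((xs @ [y]) @ ys)"
    using assms(1,2) by (cases ys) (auto simp: is_path_altdef successively_append_iff)
  then show ?thesis
    using assms by (auto simp: is_path_altdef)
qed

lemma is_path_rev [simp]: "is_path F (rev xs) \<longleftrightarrow> is_path F xs"
  by (simp add: is_path_altdef insert_commute)

lemma is_path_mono: "F \<subseteq> G \<Longrightarrow> is_path F xs \<Longrightarrow> is_path G xs"
  unfolding is_path_def by blast

lemma is_cycle_edge:
  assumes "is_cycle F C" and "i < length C"
  shows "{C ! i, C ! (Suc i mod length C)} \<in> F"
proof (cases "Suc i < length C")
  case True
  then show ?thesis using assms(1) by (simp add: is_cycle_def is_path_def)
next
  case False
  with assms(2) have "Suc i = length C" by simp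
  then have "i = length C - 1" "Suc i mod length C = 0" "C \<noteq> []" by auto
  then show ?thesis using assms(1) by (simp add: is_cycle_def last_conv_nth hd_conv_nth)
qed

lemma is_cycle_join_paths:
  assumes X: "is_path F (a # X @ [x])" and Y: "is_path F (a # Y @ [x])"
    and disj: "set X \<inter> set Y = {}" and nonempty: "X @ Y \<noteq> []"
  shows "is_cycle F (a # X @ x # rev Y)"
proof -
  have "is_path F ((x # rev Y) @ [a])"
    using Y is_path_rev[of F "a # Y @ [x]"] by simp
  then have "is_path F (x # rev Y)"
    using is_path_appendD(1) by blast
  moreover have "set (a # X) \<inter> set (rev Y) = {}"
    using Y disj by (auto simp: is_path_def)
  ultimately have "is_path F (a # X @ x # rev Y)"
    using is_path_join[of F "a # X" x "rev Y"] X by simp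
  moreover have "{last (a # X @ x # rev Y), a} \<in> F"
    using Y by (cases Y) (auto simp: is_path_altdef insert_commute)
  moreover have "length (a # X @ x # rev Y) \<ge> 3"
    using nonempty by (cases X; cases Y) auto
  ultimately show ?thesis by (simp add: is_cycle_def)
qed

lemma acyclic_paths_same_successor:
  assumes acyclic: "\<nexists>C. is_cycle F C"
    and xs: "is_path F (a # xs)" and ys: "is_path F (a # ys)"
    and nonempty: "xs \<noteq> []" "ys \<noteq> []" and last: "last xs = last ys"
  shows "hd xs = hd ys"
proof (rule ccontr)
  assume diverge: "hd xs \<noteq> hd ys"
  have "last xs \<in> set ys"
    using nonempty last last_in_set[of ys] by simp
  then have "\<exists>x\<in>set xs. x \<in> set ys"
    using nonempty last_in_set by blast
  then obtain X x X' where xs_split: "xs = X @ x # X'" and "x \<in> set ys"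
    and X_out: "\<forall>y\<in>set X. y \<notin> set ys"
    using split_list_first_prop[of xs "\<lambda>x. x \<in> set ys"] by blast
  then obtain Y Y' where ys_split: "ys = Y @ x # Y'"
    by (meson split_list)
  have "is_path F (a # X @ [x])"
    using xs xs_split is_path_appendD(1)[of F "a # X @ [x]" X'] by simp
  moreover have "is_path F (a # Y @ [x])"
    using ys ys_split is_path_appendD(1)[of F "a # Y @ [x]" Y'] by simp
  moreover have "set X \<inter> set Y = {}"
    using X_out ys_split by auto
  moreover have "X @ Y \<noteq> []"
    using diverge xs_split ys_split by auto
  ultimately show False
    using is_cycle_join_paths acyclic by blast
qed

lemma acyclic_path_unique:
  assumes acyclic: "\<nexists>C. is_cycle F C"
  shows "is_path F xs \<Longrightarrow> is_path F ys \<Longrightarrow> hd xs = hd ys \<Longrightarrow> last xs = last ys \<Longrightarrow> xs = ys"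
proof (induction xs arbitrary: ys)
  case Nil
  then show ?case by (simp add: is_path_def)
next
  case (Cons a xs')
  obtain ys' where ys: "ys = a # ys'"
    using Cons.prems(2,3) by (cases ys) (auto simp: is_path_def)
  have single: "zs = []" if "is_path F (a # zs)" "last (a # zs) = a" for zs
  proof (rule ccontr)
    assume "zs \<noteq> []"
    then have "last zs \<in> set zs" "last zs = a" using that(2) by auto
    then show False using that(1) by (auto simp: is_path_def)
  qed
  consider "xs' = []" | "ys' = []" | "xs' \<noteq> []" "ys' \<noteq> []"
    by blast
  then show ?case
  proof cases
    case 1
    then have "ys' = []"
      using Cons.prems(2,4) ys by (intro single) simp_all
    with 1 ys show ?thesis by simp
  next
    case 2
    then have "xs' = []"
      using Cons.prems(1,4) ys by (intro single) simp_all
    with 2 ys show ?thesis by simp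
  next
    case 3
    have paths: "is_path F xs'" "is_path F ys'"
      using is_path_appendD(2)[of F "[a]" xs'] is_path_appendD(2)[of F "[a]" ys']
        Cons.prems(1,2) 3 ys by simp_all
    have "hd xs' = hd ys'"
      using Cons.prems(1,2,4) 3 ys by (intro acyclic_paths_same_successor[OF acyclic]) simp_all
    then show ?thesis
      using Cons.IH[OF paths] Cons.prems(4) 3 ys by simp
  qed
qed

section \<open>Gains of paths and cycles\<close>

fun path_gain :: "('v \<Rightarrow> 'v \<Rightarrow> 'a::comm_monoid_mult) \<Rightarrow> 'v list \<Rightarrow> 'a" where
  "path_gain \<phi> (x # y # zs) = \<phi> x y * path_gain \<phi> (y # zs)"
| "path_gain \<phi> _ = 1"

lemma path_gain_split: "path_gain \<phi> (xs @ y # ys) = path_gain \<phi> (xs @ [y]) * path_gain \<phi> (y # ys)"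
  by (induction xs rule: induct_list012) (auto simp: ac_simps)

lemma path_gain_conv_prod: "path_gain \<phi> xs = (\<Prod>i<length xs - 1. \<phi> (xs ! i) (xs ! Suc i))"
proof (induction \<phi> xs rule: path_gain.induct)
  case (1 \<phi> x y zs)
  then show ?case
    by (simp add: prod.lessThan_Suc_shift del: prod.lessThan_Suc)
qed auto

lemma cycle_gain_conv_path_gain:
  assumes "xs \<noteq> []"
  shows "cycle_gain \<phi> xs = path_gain \<phi> xs * \<phi> (last xs) (hd xs)"
proof -
  obtain m where m: "length xs = Suc m"
    using assms by (cases xs) auto
  have "cycle_gain \<phi> xs = (\<Prod>i<m. \<phi> (xs ! i) (xs ! (Suc i mod Suc m))) * \<phi> (xs ! m) (xs ! 0)"
    unfolding cycle_gain_def m by simp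
  also have "(\<Prod>i<m. \<phi> (xs ! i) (xs ! (Suc i mod Suc m))) = (\<Prod>i<m. \<phi> (xs ! i) (xs ! Suc i))"
    by (rule prod.cong) auto
  also have "(\<Prod>i<m. \<phi> (xs ! i) (xs ! Suc i)) = path_gain \<phi> xs"
    using m by (simp add: path_gain_conv_prod)
  also have "xs ! m = last xs"
    using assms m by (simp add: last_conv_nth)
  also have "xs ! 0 = hd xs"
    using assms by (simp add: hd_conv_nth)
  finally show ?thesis .
qed

lemma prod_lessThan_rotate: "(\<Prod>i<n. f (Suc i mod n)) = (\<Prod>i<n. f i :: 'a::comm_monoid_mult)"
proof (cases n)
  case (Suc m)
  have "(\<Prod>i<Suc m. f (Suc i mod Suc m)) = (\<Prod>i<m. f (Suc i mod Suc m)) * f 0"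
    by simp
  also have "(\<Prod>i<m. f (Suc i mod Suc m)) = (\<Prod>i<m. f (Suc i))"
    by (rule prod.cong) auto
  also have "(\<Prod>i<m. f (Suc i)) * f 0 = (\<Prod>i<Suc m. f i)"
    by (simp add: prod.lessThan_Suc_shift mult.commute del: prod.lessThan_Suc)
  finally show ?thesis using Suc by simp
qed simp

lemma gain_nonzero: "gain E \<phi> \<Longrightarrow> {u, v} \<in> E \<Longrightarrow> \<phi> u v \<noteq> 0"
  unfolding gain_def by force

lemma gain_rev: "gain E \<phi> \<Longrightarrow> {u, v} \<in> E \<Longrightarrow> \<phi> v u = inverse (\<phi> u v)"
  unfolding gain_def by blast

lemma gain_rev_cnj: "gain E \<phi> \<Longrightarrow> {u, v} \<in> E \<Longrightarrow> \<phi> v u = cnj (\<phi> u v)"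
  using gain_rev[of E \<phi> u v] divide_conv_cnj[of "\<phi> u v" 1]
  by (simp add: gain_def inverse_eq_divide)

lemma path_gain_nonzero: "gain E \<phi> \<Longrightarrow> is_path E xs \<Longrightarrow> path_gain \<phi> xs \<noteq> 0"
  by (induction \<phi> xs rule: path_gain.induct) (auto simp: is_path_altdef gain_nonzero)

lemma cycle_gain_switching:
  assumes "is_cycle E C"
    and switch: "\<And>x y. {x, y} \<in> E \<Longrightarrow> \<phi>' x y * h x = \<phi> x y * h y"
    and nonzero: "\<And>x. x \<in> set C \<Longrightarrow> h x \<noteq> 0"
  shows "cycle_gain \<phi>' C = cycle_gain \<phi> C"
proof -
  define N where "N = length C"
  let ?next = "\<lambda>i. C ! (Suc i mod N)"
  have H: "(\<Prod>i<N. h (C ! i)) \<noteq> 0"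
    using nonzero by (simp add: N_def)
  have "cycle_gain \<phi>' C * (\<Prod>i<N. h (C ! i)) = (\<Prod>i<N. \<phi>' (C ! i) (?next i) * h (C ! i))"
    by (simp add: cycle_gain_def N_def prod.distrib)
  also have "\<dots> = (\<Prod>i<N. \<phi> (C ! i) (?next i) * h (?next i))"
    using is_cycle_edge[OF assms(1)] switch by (simp add: N_def)
  also have "\<dots> = cycle_gain \<phi> C * (\<Prod>i<N. h (C ! i))"
    by (simp add: cycle_gain_def N_def prod.distrib prod_lessThan_rotate[of "\<lambda>i. h (C ! i)"])
  finally show ?thesis
    using H by simp
qed

section \<open>Switching along a normal spanning tree\<close>

lemma simple_graph_edgeD: "simple_graph n E \<Longrightarrow> {u, v} \<in> E \<Longrightarrow> u \<noteq> v \<and> u < n \<and> v < n"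
  unfolding simple_graph_def by (metis doubleton_eq_iff)

definition tree_path :: "nat set set \<Rightarrow> nat \<Rightarrow> nat \<Rightarrow> nat list" where
  "tree_path ET rt v = (THE xs. is_path ET xs \<and> hd xs = rt \<and> last xs = v)"

locale normal_tree =
  fixes n :: nat and E ET :: "nat set set" and rt :: nat
  assumes simple: "simple_graph n E" and normal: "normal_spanning_tree n E ET rt"
begin

lemma acyclic: "\<nexists>C. is_cycle ET C"
  and tree_subset: "ET \<subseteq> E" and tree_connected: "connected_on n ET" and root_less: "rt < n"
  and comparable: "{u, v} \<in> E \<Longrightarrow> tree_le ET rt u v \<or> tree_le ET rt v u"
  using normal by (auto simp: normal_spanning_tree_def spanning_tree_def)

lemma tree_path_eqI: "is_path ET xs \<Longrightarrow> hd xs = rt \<Longrightarrow> last xs = v \<Longrightarrow> tree_path ET rt v = xs"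
  unfolding tree_path_def by (rule the_equality) (auto intro: acyclic_path_unique[OF acyclic])

lemma tree_path_from_root:
  assumes "v < n"
  shows "is_path ET (tree_path ET rt v)" "hd (tree_path ET rt v) = rt" "last (tree_path ET rt v) = v"
proof -
  obtain xs where "is_path ET xs" "hd xs = rt" "last xs = v"
    using tree_connected root_less assms unfolding connected_on_def by blast
  then show "is_path ET (tree_path ET rt v)" "hd (tree_path ET rt v) = rt" "last (tree_path ET rt v) = v"
    using tree_path_eqI by simp_all
qed

lemma tree_le_tree_pathE:
  assumes "tree_le ET rt u v"
  obtains A B where "tree_path ET rt u = A @ [u]" and "tree_path ET rt v = A @ u # B"
    and "is_path ET (A @ u # B)" and "last (A @ u # B) = v"
proof -
  obtain xs where xs: "is_path ET xs" "hd xs = rt" "last xs = v" "u \<in> set xs"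
    using assms unfolding tree_le_def by blast
  then obtain A B where AB: "xs = A @ u # B"
    by (meson split_list)
  have "tree_path ET rt u = A @ [u]"
    using xs AB is_path_appendD(1)[of ET "A @ [u]" B] by (intro tree_path_eqI) (auto simp: hd_append)
  moreover have "tree_path ET rt v = A @ u # B"
    using xs AB tree_path_eqI by simp
  ultimately show thesis
    using that xs AB by simp
qed

lemma tree_le_antisym:
  assumes "tree_le ET rt u v" and "tree_le ET rt v u"
  shows "u = v"
proof (rule ccontr)
  assume "u \<noteq> v"
  obtain A B where u: "tree_path ET rt u = A @ [u]" and "tree_path ET rt v = A @ u # B"
    and path: "is_path ET (A @ u # B)" and last: "last (A @ u # B) = v"
    using assms(1) by (rule tree_le_tree_pathE)
  obtain A' B' where "tree_path ET rt u = A' @ v # B'"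
    using assms(2) by (rule tree_le_tree_pathE)
  then have "v \<in> set (A @ [u])"
    using u by simp
  then have "v \<in> set A"
    using \<open>u \<noteq> v\<close> by simp
  moreover have "v \<in> set B"
    using last \<open>u \<noteq> v\<close> by (cases B rule: rev_cases) auto
  ultimately show False
    using path by (auto simp: is_path_def)
qed

lemma fund_cycle_eq:
  assumes "tree_le ET rt u v" and "u \<noteq> v"
    and "is_path ET (A @ u # B)" and "last (A @ u # B) = v"
  shows "fund_cycle ET rt {u, v} = u # B"
  unfolding fund_cycle_def
proof (rule the_equality)
  have "B \<noteq> []"
    using assms(2,4) by auto
  then show "is_path ET (u # B) \<and> {hd (u # B), last (u # B)} = {u, v} \<and> tree_le ET rt (hd (u # B)) (last (u # B))"
    using assms is_path_appendD(2)[of ET A "u # B"] by simp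
next
  fix ys
  assume ys: "is_path ET ys \<and> {hd ys, last ys} = {u, v} \<and> tree_le ET rt (hd ys) (last ys)"
  then have "hd ys = u \<and> last ys = v"
    using tree_le_antisym[OF assms(1)] assms(2) by (auto simp: doubleton_eq_iff)
  moreover have "is_path ET (u # B)" "last (u # B) = v"
    using assms is_path_appendD(2)[of ET A "u # B"] by (auto simp: last_append)
  ultimately show "ys = u # B"
    using ys acyclic_path_unique[OF acyclic] by simp
qed

end

locale fund_cycle_gains_agree = normal_tree +
  fixes \<phi> \<phi>' :: "nat \<Rightarrow> nat \<Rightarrow> complex"
  assumes gain: "gain E \<phi>" and gain': "gain E \<phi>'"
    and fund_agree: "\<And>e. e \<in> E - ET \<Longrightarrow> cycle_gain \<phi>' (fund_cycle ET rt e) = cycle_gain \<phi> (fund_cycle ET rt e)"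
begin

definition potential :: "nat \<Rightarrow> complex" where
  "potential v = path_gain \<phi>' (tree_path ET rt v) / path_gain \<phi> (tree_path ET rt v)"

lemma tree_path_gain_nonzero: "v < n \<Longrightarrow> path_gain \<chi> (tree_path ET rt v) \<noteq> 0" if "gain E \<chi>"
  using tree_path_from_root(1) tree_subset is_path_mono path_gain_nonzero[OF that] by blast

lemma potential_nonzero: "v < n \<Longrightarrow> potential v \<noteq> 0"
  using tree_path_gain_nonzero gain gain' by (simp add: potential_def)

text \<open>For a tree edge the tree path from u to v is the edge itself; otherwise it closes up with
  the edge to the fundamental cycle of uv, on which the two gains agree.\<close>
lemma tree_path_edge_ratio:
  assumes e: "{u, v} \<in> E" and path: "is_path ET (u # B)" and last: "last (u # B) = v"
    and le: "tree_le ET rt u v"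
  shows "\<phi>' u v * path_gain \<phi> (u # B) = \<phi> u v * path_gain \<phi>' (u # B)"
proof (cases "{u, v} \<in> ET")
  case True
  have "is_path ET [u, v]"
    using True simple_graph_edgeD[OF simple e] by (simp add: is_path_def)
  then have "u # B = [u, v]"
    using last by (intro acyclic_path_unique[OF acyclic path]) simp_all
  then show ?thesis
    by (simp add: mult.commute)
next
  case False
  have "u \<noteq> v"
    using simple_graph_edgeD[OF simple e] by blast
  then have "fund_cycle ET rt {u, v} = u # B"
    using fund_cycle_eq[OF le, of "[]"] path last by simp
  then have "path_gain \<phi>' (u # B) * \<phi>' v u = path_gain \<phi> (u # B) * \<phi> v u"
    using fund_agree[of "{u, v}"] e False last by (simp add: cycle_gain_conv_path_gain)
  then show ?thesis
    using gain_rev[OF gain e] gain_rev[OF gain' e] gain_nonzero[OF gain e] gain_nonzero[OF gain' e]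
    by (simp add: field_simps)
qed

lemma potential_switch_oriented:
  assumes e: "{u, v} \<in> E" and le: "tree_le ET rt u v"
  shows "\<phi>' u v * potential u = \<phi> u v * potential v"
proof -
  obtain A B where tu: "tree_path ET rt u = A @ [u]" and tv: "tree_path ET rt v = A @ u # B"
    and path: "is_path ET (A @ u # B)" and last: "last (A @ u # B) = v"
    using le by (rule tree_le_tree_pathE)
  have B: "is_path ET (u # B)" "last (u # B) = v"
    using path last is_path_appendD(2)[of ET A "u # B"] by (auto simp: last_append)
  have split: "path_gain \<chi> (tree_path ET rt v) = path_gain \<chi> (tree_path ET rt u) * path_gain \<chi> (u # B)"
    for \<chi> :: "nat \<Rightarrow> nat \<Rightarrow> complex"
    unfolding tu tv by (rule path_gain_split)
  have "u < n"
    using simple_graph_edgeD[OF simple e] by blast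
  moreover have "path_gain \<phi> (u # B) \<noteq> 0"
    using B(1) tree_subset is_path_mono path_gain_nonzero[OF gain] by blast
  ultimately show ?thesis
    using tree_path_edge_ratio[OF e B le] tree_path_gain_nonzero[OF gain]
    by (simp add: potential_def split field_simps)
qed

lemma potential_switch:
  assumes e: "{u, v} \<in> E"
  shows "\<phi>' u v * potential u = \<phi> u v * potential v"
  using comparable[OF e]
proof
  assume le: "tree_le ET rt v u"
  have e': "{v, u} \<in> E"
    using e by (simp add: insert_commute)
  have "\<phi>' v u * potential v = \<phi> v u * potential u"
    using potential_switch_oriented[OF e' le] .
  then show ?thesis
    using gain_rev[OF gain e] gain_rev[OF gain' e] gain_nonzero[OF gain e] gain_nonzero[OF gain' e]
    by (simp add: field_simps)
qed (rule potential_switch_oriented[OF e])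

lemma cycle_gain_eq:
  assumes "is_cycle E C"
  shows "cycle_gain \<phi>' C = cycle_gain \<phi> C"
proof (rule cycle_gain_switching[OF assms potential_switch])
  fix x
  assume "x \<in> set C"
  then obtain i where "i < length C" "x = C ! i"
    by (metis in_set_conv_nth)
  then show "potential x \<noteq> 0"
    using is_cycle_edge[OF assms] simple_graph_edgeD[OF simple] potential_nonzero by blast
qed

end

section \<open>Expanding determinants along the cycle through a vertex\<close>

definition leibniz_det :: "('v \<Rightarrow> 'v \<Rightarrow> 'a::comm_ring_1) \<Rightarrow> 'v set \<Rightarrow> 'a" where
  "leibniz_det M S = (\<Sum>p | p permutes S. of_int (sign p) * (\<Prod>i\<in>S. M i (p i)))"

definition cyclic_leibniz_sum :: "('v \<Rightarrow> 'v \<Rightarrow> 'a::comm_ring_1) \<Rightarrow> 'v set \<Rightarrow> 'a" where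
  "cyclic_leibniz_sum M W = (\<Sum>q | q permutes W \<and> cyclic_on q W. of_int (sign q) * (\<Prod>i\<in>W. M i (q i)))"

lemma perm_restrict_cyclic_permutes:
  assumes "f permutes S" and "cyclic_on f A"
  shows "perm_restrict f A permutes A"
proof (rule bij_imp_permutes)
  have "f ` A = A"
    using endo_inj_surj[OF finite_cyclic_on[OF assms(2)]] cyclic_on_inI[OF assms(2)]
      permutes_inj_on[OF assms(1)] by blast
  then have "bij_betw f A A"
    using permutes_inj_on[OF assms(1)] by (simp add: bij_betw_def)
  then show "bij_betw (perm_restrict f A) A A"
    by (rule bij_betw_cong[THEN iffD1, rotated]) (simp add: perm_restrict_simps)
qed (simp add: perm_restrict_simps)

lemma perm_restrict_comp_permutes:
  assumes q: "q permutes W" and r: "r permutes (S - W)"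
  shows "perm_restrict (r \<circ> q) W = q" and "perm_restrict (r \<circ> q) (S - W) = r"
proof -
  have "q x \<in> W \<longleftrightarrow> x \<in> W" "x \<notin> W \<Longrightarrow> q x = x" "x \<notin> S - W \<Longrightarrow> r x = x" for x
    using q r by (auto simp: permutes_in_image permutes_not_in)
  then show "perm_restrict (r \<circ> q) W = q" "perm_restrict (r \<circ> q) (S - W) = r"
    by (auto simp: fun_eq_iff perm_restrict_def)
qed

lemma leibniz_term_comp:
  fixes M :: "'v \<Rightarrow> 'v \<Rightarrow> 'a::comm_ring_1"
  assumes S: "finite S" "W \<subseteq> S" and q: "q permutes W" and r: "r permutes (S - W)"
  shows "of_int (sign (r \<circ> q)) * (\<Prod>i\<in>S. M i ((r \<circ> q) i))
    = of_int (sign q) * (\<Prod>i\<in>W. M i (q i)) * (of_int (sign r) * (\<Prod>i\<in>S - W. M i (r i)))"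
proof -
  have "permutation q" "permutation r"
    using q r S finite_subset by (auto simp: permutation_permutes)
  moreover have "(\<Prod>i\<in>S. M i ((r \<circ> q) i)) = (\<Prod>i\<in>W. M i (q i)) * (\<Prod>i\<in>S - W. M i (r i))"
  proof -
    have "(\<Prod>i\<in>S. M i ((r \<circ> q) i)) = (\<Prod>i\<in>W. M i ((r \<circ> q) i)) * (\<Prod>i\<in>S - W. M i ((r \<circ> q) i))"
      using prod.subset_diff[OF S(2,1)] by (simp add: mult.commute)
    also have "\<dots> = (\<Prod>i\<in>W. M i (q i)) * (\<Prod>i\<in>S - W. M i (r i))"
      using perm_restrict_comp_permutes[OF q r]
      by (intro arg_cong2[where f = "(*)"] prod.cong refl) (metis perm_restrict_simps(1))+
    finally show ?thesis .
  qed
  ultimately show ?thesis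
    by (simp add: sign_compose)
qed

text \<open>A permutation of S splits into its cycle W through v and a permutation of S - W.\<close>
lemma leibniz_sum_orbit:
  fixes M :: "'v \<Rightarrow> 'v \<Rightarrow> 'a::comm_ring_1"
  assumes S: "finite S" and W: "W \<subseteq> S" "v \<in> W"
  shows "(\<Sum>p | p permutes S \<and> orbit p v = W. of_int (sign p) * (\<Prod>i\<in>S. M i (p i)))
    = cyclic_leibniz_sum M W * leibniz_det M (S - W)"
proof -
  let ?Q = "{q. q permutes W \<and> cyclic_on q W}" and ?R = "{r. r permutes (S - W)}"
  have compose: "r \<circ> q permutes S \<and> orbit (r \<circ> q) v = W" if "q \<in> ?Q" "r \<in> ?R" for q r
  proof
    show "r \<circ> q permutes S"
      using that W by (auto intro: permutes_compose permutes_subset)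
    have "cyclic_on (r \<circ> q) W"
      using that by (intro permutes_comp_preserves_cyclic2[of r "S - W" q W W]) auto
    then show "orbit (r \<circ> q) v = W"
      using W by (simp add: orbit_cyclic_eq3)
  qed
  have split: "perm_restrict p (S - W) \<circ> perm_restrict p W = p"
    and parts: "perm_restrict p W \<in> ?Q" "perm_restrict p (S - W) \<in> ?R"
    if p: "p permutes S" "orbit p v = W" for p
  proof -
    have "v \<in> orbit p v"
      using p S by (intro permutation_self_in_orbit) (auto simp: permutation_permutes)
    then have cyc: "cyclic_on p W"
      using p(2) by (auto intro: cyclic_on_singleI)
    have "(S - W) \<inter> W = {}" "(S - W) \<union> W = S"
      using W by auto
    then show "perm_restrict p (S - W) \<circ> perm_restrict p W = p"
      using perm_restrict_comp[of "S - W" W p] cyc p(1) by simp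
    show "perm_restrict p W \<in> ?Q"
      using perm_restrict_cyclic_permutes[OF p(1) cyc] cyc by (simp add: cyclic_on_perm_restrict)
    show "perm_restrict p (S - W) \<in> ?R"
      using perm_restrict_diff_cyclic[OF p(1) cyc] by simp
  qed
  have "cyclic_leibniz_sum M W * leibniz_det M (S - W)
      = (\<Sum>(q, r)\<in>?Q \<times> ?R. of_int (sign q) * (\<Prod>i\<in>W. M i (q i)) * (of_int (sign r) * (\<Prod>i\<in>S - W. M i (r i))))"
    unfolding cyclic_leibniz_sum_def leibniz_det_def sum_product sum.cartesian_product ..
  also have "\<dots> = (\<Sum>p | p permutes S \<and> orbit p v = W. of_int (sign p) * (\<Prod>i\<in>S. M i (p i)))"
    by (rule sum.reindex_bij_witness[where j = "\<lambda>(q, r). r \<circ> q"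
          and i = "\<lambda>p. (perm_restrict p W, perm_restrict p (S - W))"])
      (use perm_restrict_comp_permutes compose split parts leibniz_term_comp[OF S W(1)] in auto)
  finally show ?thesis ..
qed

lemma leibniz_det_expand_cycle:
  fixes M :: "'v \<Rightarrow> 'v \<Rightarrow> 'a::comm_ring_1"
  assumes S: "finite S" and v: "v \<in> S"
  shows "leibniz_det M S = (\<Sum>W | W \<subseteq> S \<and> v \<in> W. cyclic_leibniz_sum M W * leibniz_det M (S - W))"
proof -
  have "leibniz_det M S = (\<Sum>W | W \<subseteq> S \<and> v \<in> W.
      \<Sum>p \<in> {p \<in> {p. p permutes S}. orbit p v = W}. of_int (sign p) * (\<Prod>i\<in>S. M i (p i)))"
    unfolding leibniz_det_def
  proof (rule sum.group[symmetric])
    show "finite {p. p permutes S}"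
      using S by (rule finite_permutations)
    show "finite {W. W \<subseteq> S \<and> v \<in> W}"
      using S by simp
    show "(\<lambda>p. orbit p v) ` {p. p permutes S} \<subseteq> {W. W \<subseteq> S \<and> v \<in> W}"
      using S v permutes_orbit_subset by (fastforce intro!: permutation_self_in_orbit
          simp: permutation_permutes)
  qed
  also have "\<dots> = (\<Sum>W | W \<subseteq> S \<and> v \<in> W. cyclic_leibniz_sum M W * leibniz_det M (S - W))"
    using leibniz_sum_orbit[OF S] by (intro sum.cong) auto
  finally show ?thesis .
qed

text \<open>Unqualified \<open>inv\<close> would be the group inverse of HOL-Algebra here.\<close>

lemma cyclic_on_inv:
  assumes "q permutes W" and "cyclic_on q W"
  shows "cyclic_on (Hilbert_Choice.inv q) W"
proof -
  have "permutation q"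
    using assms finite_cyclic_on by (auto simp: permutation_permutes)
  then show ?thesis
    using assms(2) by (simp add: cyclic_on_def orbit_inv_eq)
qed

text \<open>Pair every cyclic permutation with its inverse, which has the same sign.\<close>
lemma cyclic_leibniz_sum_eq:
  fixes M M' :: "'v \<Rightarrow> 'v \<Rightarrow> 'a::{idom, ring_char_0}"
  assumes pairs: "\<And>q. q permutes W \<Longrightarrow> cyclic_on q W \<Longrightarrow>
      (\<Prod>i\<in>W. M i (q i)) + (\<Prod>i\<in>W. M i (Hilbert_Choice.inv q i)) = (\<Prod>i\<in>W. M' i (q i)) + (\<Prod>i\<in>W. M' i (Hilbert_Choice.inv q i))"
  shows "cyclic_leibniz_sum M W = cyclic_leibniz_sum M' W"
proof -
  let ?Q = "{q. q permutes W \<and> cyclic_on q W}"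
  have perm: "permutation q" if "q \<in> ?Q" for q
    using that finite_cyclic_on by (auto simp: permutation_permutes)
  have doubled: "2 * cyclic_leibniz_sum N W
      = (\<Sum>q\<in>?Q. of_int (sign q) * ((\<Prod>i\<in>W. N i (q i)) + (\<Prod>i\<in>W. N i (Hilbert_Choice.inv q i))))"
    for N :: "'v \<Rightarrow> 'v \<Rightarrow> 'a"
  proof -
    have A: "cyclic_leibniz_sum N W = (\<Sum>q\<in>?Q. of_int (sign q) * (\<Prod>i\<in>W. N i (q i)))"
      by (simp add: cyclic_leibniz_sum_def)
    have "cyclic_leibniz_sum N W = (\<Sum>q\<in>?Q. of_int (sign (Hilbert_Choice.inv q)) * (\<Prod>i\<in>W. N i (Hilbert_Choice.inv q i)))"
      unfolding cyclic_leibniz_sum_def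
      by (rule sum.reindex_bij_witness[where i = Hilbert_Choice.inv and j = Hilbert_Choice.inv])
        (auto simp: permutes_inv permutes_inv_inv cyclic_on_inv)
    also have "\<dots> = (\<Sum>q\<in>?Q. of_int (sign q) * (\<Prod>i\<in>W. N i (Hilbert_Choice.inv q i)))"
      using perm by (intro sum.cong refl) (simp add: sign_inverse)
    finally have B: "cyclic_leibniz_sum N W
        = (\<Sum>q\<in>?Q. of_int (sign q) * (\<Prod>i\<in>W. N i (Hilbert_Choice.inv q i)))" .
    have "2 * cyclic_leibniz_sum N W = cyclic_leibniz_sum N W + cyclic_leibniz_sum N W"
      by (rule mult_2)
    also have "\<dots> = (\<Sum>q\<in>?Q. of_int (sign q) * (\<Prod>i\<in>W. N i (q i)))
        + (\<Sum>q\<in>?Q. of_int (sign q) * (\<Prod>i\<in>W. N i (Hilbert_Choice.inv q i)))"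
      by (rule arg_cong2[where f = "(+)", OF A B])
    finally show ?thesis
      by (simp only: distrib_left sum.distrib)
  qed
  have "2 * cyclic_leibniz_sum M W = 2 * cyclic_leibniz_sum M' W"
    unfolding doubled using pairs by (intro sum.cong) auto
  then show ?thesis
    by simp
qed

lemma leibniz_det_eq:
  fixes M M' :: "'v \<Rightarrow> 'v \<Rightarrow> 'a::{idom, ring_char_0}"
  assumes "finite S"
    and "\<And>W q. W \<subseteq> S \<Longrightarrow> q permutes W \<Longrightarrow> cyclic_on q W \<Longrightarrow>
      (\<Prod>i\<in>W. M i (q i)) + (\<Prod>i\<in>W. M i (Hilbert_Choice.inv q i)) = (\<Prod>i\<in>W. M' i (q i)) + (\<Prod>i\<in>W. M' i (Hilbert_Choice.inv q i))"
  shows "leibniz_det M S = leibniz_det M' S"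
  using assms
proof (induction S rule: finite_psubset_induct)
  case (psubset S)
  show ?case
  proof (cases "S = {}")
    case True
    then show ?thesis
      by (simp add: leibniz_det_def)
  next
    case False
    then obtain v where v: "v \<in> S"
      by blast
    have parts_eq: "cyclic_leibniz_sum M W * leibniz_det M (S - W)
        = cyclic_leibniz_sum M' W * leibniz_det M' (S - W)"
      if W: "W \<in> {W. W \<subseteq> S \<and> v \<in> W}" for W
    proof -
      have "cyclic_leibniz_sum M W = cyclic_leibniz_sum M' W"
        using W by (intro cyclic_leibniz_sum_eq psubset.prems) auto
      moreover have "leibniz_det M (S - W) = leibniz_det M' (S - W)"
        using W by (intro psubset.IH) (auto intro!: psubset.prems)
      ultimately show ?thesis
        by simp
    qed
    have "leibniz_det M S = (\<Sum>W | W \<subseteq> S \<and> v \<in> W. cyclic_leibniz_sum M W * leibniz_det M (S - W))"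
      by (rule leibniz_det_expand_cycle[OF psubset.hyps(1) v])
    also have "\<dots> = (\<Sum>W | W \<subseteq> S \<and> v \<in> W. cyclic_leibniz_sum M' W * leibniz_det M' (S - W))"
      by (rule sum.cong[OF refl parts_eq])
    also have "\<dots> = leibniz_det M' S"
      by (rule leibniz_det_expand_cycle[OF psubset.hyps(1) v, symmetric])
    finally show ?thesis .
  qed
qed

section \<open>Characteristic polynomials of Hermitian matrices and gain graphs\<close>

lemma char_poly_matrix_entry:
  "A \<in> carrier_mat n n \<Longrightarrow> i < n \<Longrightarrow> j < n \<Longrightarrow>
    char_poly_matrix A $$ (i, j) = (if i = j then [:0, 1:] else 0) + [:- A $$ (i, j):]"
  by (simp add: char_poly_matrix_def)

lemma char_poly_conv_leibniz_det:
  "A \<in> carrier_mat n n \<Longrightarrow> char_poly A = leibniz_det (\<lambda>i j. char_poly_matrix A $$ (i, j)) {0..<n}"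
  by (simp add: char_poly_def leibniz_det_def det_def'[of _ n])

text \<open>The two products are complex conjugates of each other.\<close>
lemma hermitian_cyclic_pair:
  fixes A :: "complex mat"
  assumes A: "A \<in> carrier_mat n n"
    and herm: "\<And>i j. i < n \<Longrightarrow> j < n \<Longrightarrow> A $$ (j, i) = cnj (A $$ (i, j))"
    and W: "W \<subseteq> {0..<n}" and q: "q permutes W" and no_fix: "\<And>i. i \<in> W \<Longrightarrow> q i \<noteq> i"
  shows "(\<Prod>i\<in>W. char_poly_matrix A $$ (i, q i)) + (\<Prod>i\<in>W. char_poly_matrix A $$ (i, Hilbert_Choice.inv q i))
    = [:complex_of_real (2 * Re (\<Prod>i\<in>W. - A $$ (i, q i))):]"
proof -
  have in_range: "i < n" "q i < n" if "i \<in> W" for i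
  proof -
    have "q i \<in> W"
      using that permutes_in_image[OF q] by simp
    then show "i < n" "q i < n"
      using that W by auto
  qed
  have forward_entry: "char_poly_matrix A $$ (i, q i) = [:- A $$ (i, q i):]" if "i \<in> W" for i
    using no_fix[OF that] in_range[OF that] by (simp add: char_poly_matrix_entry[OF A])
  have backward_entry: "char_poly_matrix A $$ (q j, Hilbert_Choice.inv q (q j)) = [:cnj (- A $$ (j, q j)):]"
    if "j \<in> W" for j
    using no_fix[OF that] in_range[OF that] herm[of j "q j"]
    by (simp add: char_poly_matrix_entry[OF A] permutes_inverses(2)[OF q])
  have forward: "(\<Prod>i\<in>W. char_poly_matrix A $$ (i, q i)) = [:\<Prod>i\<in>W. - A $$ (i, q i):]"
    by (simp add: forward_entry prod_to_poly)
  have "(\<Prod>i\<in>W. char_poly_matrix A $$ (i, Hilbert_Choice.inv q i))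
      = (\<Prod>j\<in>W. char_poly_matrix A $$ (q j, Hilbert_Choice.inv q (q j)))"
    by (rule prod.reindex_bij_betw[OF permutes_imp_bij[OF q], symmetric])
  also have "\<dots> = [:cnj (\<Prod>i\<in>W. - A $$ (i, q i)):]"
    by (simp add: backward_entry prod_to_poly)
  finally have backward: "(\<Prod>i\<in>W. char_poly_matrix A $$ (i, Hilbert_Choice.inv q i))
      = [:cnj (\<Prod>i\<in>W. - A $$ (i, q i)):]" .
  show ?thesis
    by (simp only: forward backward add_pCons complex_add_cnj add_0)
qed

lemma char_poly_eq_if_Re_cyclic_products_eq:
  fixes A B :: "complex mat"
  assumes A: "A \<in> carrier_mat n n" and B: "B \<in> carrier_mat n n"
    and herm_A: "\<And>i j. i < n \<Longrightarrow> j < n \<Longrightarrow> A $$ (j, i) = cnj (A $$ (i, j))"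
    and herm_B: "\<And>i j. i < n \<Longrightarrow> j < n \<Longrightarrow> B $$ (j, i) = cnj (B $$ (i, j))"
    and diag: "\<And>i. i < n \<Longrightarrow> A $$ (i, i) = B $$ (i, i)"
    and cyclic: "\<And>W q. W \<subseteq> {0..<n} \<Longrightarrow> 2 \<le> card W \<Longrightarrow> q permutes W \<Longrightarrow> cyclic_on q W \<Longrightarrow>
      Re (\<Prod>i\<in>W. A $$ (i, q i)) = Re (\<Prod>i\<in>W. B $$ (i, q i))"
  shows "char_poly A = char_poly B"
  unfolding char_poly_conv_leibniz_det[OF A] char_poly_conv_leibniz_det[OF B]
proof (rule leibniz_det_eq)
  fix W q
  assume W: "W \<subseteq> {0..<n}" and q: "q permutes W" and cyc: "cyclic_on q W"
  have "card W \<noteq> 0"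
    using cyc finite_cyclic_on[OF cyc] by (auto simp: cyclic_on_alldef)
  then consider "card W = 1" | "2 \<le> card W"
    by linarith
  then show "(\<Prod>i\<in>W. char_poly_matrix A $$ (i, q i)) + (\<Prod>i\<in>W. char_poly_matrix A $$ (i, Hilbert_Choice.inv q i))
    = (\<Prod>i\<in>W. char_poly_matrix B $$ (i, q i)) + (\<Prod>i\<in>W. char_poly_matrix B $$ (i, Hilbert_Choice.inv q i))"
  proof cases
    case 1
    then obtain w where w: "W = {w}"
      by (rule card_1_singletonE)
    then have "q w = w" "Hilbert_Choice.inv q w = w" "w < n"
      using permutes_in_image[OF q] permutes_in_image[OF permutes_inv[OF q]] W by auto
    then show ?thesis
      using diag w A B by (simp add: char_poly_matrix_entry)
  next
    case 2
    have no_fix: "q i \<noteq> i" if "i \<in> W" for i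
      using eq_on_cyclic_on_iff1[OF cyc that] 2 by auto
    have "Re (\<Prod>i\<in>W. - A $$ (i, q i)) = Re (\<Prod>i\<in>W. - B $$ (i, q i))"
    proof -
      have "Re (\<Prod>i\<in>W. - C $$ (i, q i)) = (- 1) ^ card W * Re (\<Prod>i\<in>W. C $$ (i, q i))"
        for C :: "complex mat"
        by (cases "even (card W)") (simp_all add: prod_uminus)
      then show ?thesis
        using cyclic[OF W 2 q cyc] by simp
    qed
    then show ?thesis
      using hermitian_cyclic_pair[OF A herm_A W q no_fix] hermitian_cyclic_pair[OF B herm_B W q no_fix]
      by simp
  qed
qed simp

lemma cyclic_on_listE:
  assumes "cyclic_on q W"
  obtains xs where "distinct xs" and "set xs = W"
    and "\<And>i. i < length xs \<Longrightarrow> xs ! (Suc i mod length xs) = q (xs ! i)"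
proof -
  obtain v where v: "v \<in> W" "W = orbit q v"
    using assms by (auto simp: cyclic_on_def)
  then have self: "v \<in> orbit q v"
    by simp
  define N where "N = funpow_dist1 q v v"
  have inj: "inj_on (\<lambda>k. (q ^^ k) v) {0..<N}"
    unfolding N_def by (rule inj_on_funpow_dist1[OF self])
  have orbit: "orbit q v = (\<lambda>k. (q ^^ k) v) ` {0..<N}"
    unfolding N_def by (rule orbit_conv_funpow_dist1[OF self])
  have period: "(q ^^ N) v = v"
    unfolding N_def by (rule funpow_dist1_prop[OF self])
  define xs where "xs = map (\<lambda>k. (q ^^ k) v) [0..<N]"
  have "distinct xs"
    using inj by (simp add: xs_def distinct_map)
  moreover have "set xs = W"
    using orbit v(2) by (simp add: xs_def)
  moreover have "xs ! (Suc i mod length xs) = q (xs ! i)" if "i < length xs" for i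
  proof -
    from period have "(q ^^ (Suc i mod N)) v = (q ^^ Suc i) v"
      by (rule funpow_mod_eq)
    then show ?thesis
      using that by (simp add: xs_def)
  qed
  ultimately show thesis
    using that by blast
qed

lemma cycle_gain_cyclic_list:
  assumes "distinct xs" and "\<And>i. i < length xs \<Longrightarrow> xs ! (Suc i mod length xs) = q (xs ! i)"
  shows "cycle_gain \<chi> xs = (\<Prod>x\<in>set xs. \<chi> x (q x))"
proof -
  have "cycle_gain \<chi> xs = (\<Prod>i<length xs. \<chi> (xs ! i) (q (xs ! i)))"
    unfolding cycle_gain_def using assms(2) by (intro prod.cong) auto
  also have "\<dots> = (\<Prod>x\<in>set xs. \<chi> x (q x))"
    using bij_betw_nth[OF assms(1) refl refl] by (rule prod.reindex_bij_betw)
  finally show ?thesis .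
qed

lemma is_cycle_cyclic_list:
  assumes "distinct xs" and "3 \<le> length xs"
    and succ: "\<And>i. i < length xs \<Longrightarrow> xs ! (Suc i mod length xs) = q (xs ! i)"
    and edges: "\<And>x. x \<in> set xs \<Longrightarrow> {x, q x} \<in> E"
  shows "is_cycle E xs"
proof -
  have "{xs ! i, xs ! Suc i} \<in> E" if "Suc i < length xs" for i
    using succ[of i] edges[of "xs ! i"] that by simp
  moreover have "{last xs, hd xs} \<in> E"
  proof -
    obtain m where m: "length xs = Suc m"
      using assms(2) by (cases xs) auto
    then have "xs ! 0 = q (xs ! m)"
      using succ[of m] by simp
    moreover have "xs \<noteq> []"
      using m by auto
    ultimately have "hd xs = q (last xs)" and "last xs \<in> set xs"
      using m by (simp_all add: hd_conv_nth last_conv_nth)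
    then show ?thesis
      using edges by simp
  qed
  ultimately show ?thesis
    using assms(1,2) by (auto simp: is_cycle_def is_path_def)
qed

lemma gain_adj_mat_entry:
  "i < n \<Longrightarrow> j < n \<Longrightarrow> gain_adj_mat n E \<chi> $$ (i, j) = (if {i, j} \<in> E then \<chi> i j else 0)"
  by (simp add: gain_adj_mat_def)

lemma cycle_gain_digon: "gain E \<chi> \<Longrightarrow> {a, b} \<in> E \<Longrightarrow> cycle_gain \<chi> [a, b] = 1"
  using gain_rev[of E \<chi> a b] gain_nonzero[of E \<chi> a b] by (simp add: cycle_gain_conv_path_gain)

lemma Re_cyclic_product_gain_adj_mat_eq:
  assumes gain: "gain E \<phi>" "gain E \<psi>"
    and Re_eq: "\<And>C. is_cycle E C \<Longrightarrow> Re (cycle_gain \<phi> C) = Re (cycle_gain \<psi> C)"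
    and W: "W \<subseteq> {0..<n}" "2 \<le> card W" and q: "q permutes W" and cyc: "cyclic_on q W"
  shows "Re (\<Prod>i\<in>W. gain_adj_mat n E \<phi> $$ (i, q i)) = Re (\<Prod>i\<in>W. gain_adj_mat n E \<psi> $$ (i, q i))"
proof -
  have entry: "gain_adj_mat n E \<chi> $$ (i, q i) = (if {i, q i} \<in> E then \<chi> i (q i) else 0)"
    if "i \<in> W" for i \<chi>
    using that W permutes_in_image[OF q, of i] by (intro gain_adj_mat_entry) auto
  show ?thesis
  proof (cases "\<forall>i\<in>W. {i, q i} \<in> E")
    case False
    then have "(\<Prod>i\<in>W. gain_adj_mat n E \<chi> $$ (i, q i)) = 0" for \<chi>
      using finite_cyclic_on[OF cyc] by (auto simp: entry intro!: prod_zero)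
    then show ?thesis
      by simp
  next
    case True
    obtain xs where xs: "distinct xs" "set xs = W"
      and succ: "\<And>i. i < length xs \<Longrightarrow> xs ! (Suc i mod length xs) = q (xs ! i)"
      using cyclic_on_listE[OF cyc] by blast
    have len: "length xs = card W"
      using xs distinct_card by fastforce
    have product: "(\<Prod>i\<in>W. gain_adj_mat n E \<chi> $$ (i, q i)) = cycle_gain \<chi> xs" for \<chi>
      using True xs cycle_gain_cyclic_list[OF xs(1) succ] by (simp add: entry)
    show ?thesis
    proof (cases "card W = 2")
      case True
      then obtain a b where ab: "xs = [a, b]"
        using len by (auto simp: numeral_2_eq_2 length_Suc_conv)
      then have "{a, b} \<in> E"
        using succ[of 0] \<open>\<forall>i\<in>W. {i, q i} \<in> E\<close> xs(2) by auto
      then show ?thesis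
        using cycle_gain_digon gain by (simp add: product ab)
    next
      case False
      then have "is_cycle E xs"
        using \<open>\<forall>i\<in>W. {i, q i} \<in> E\<close> W(2) xs len by (intro is_cycle_cyclic_list[OF xs(1) _ succ]) auto
      then show ?thesis
        using Re_eq by (simp add: product)
    qed
  qed
qed

lemma gain_adj_mat_hermitian:
  "gain E \<chi> \<Longrightarrow> i < n \<Longrightarrow> j < n \<Longrightarrow> gain_adj_mat n E \<chi> $$ (j, i) = cnj (gain_adj_mat n E \<chi> $$ (i, j))"
  using gain_rev_cnj[of E \<chi> i j] by (simp add: gain_adj_mat_entry insert_commute)

lemma char_poly_gain_adj_mat_eq:
  assumes simple: "simple_graph n E" and gain: "gain E \<phi>" "gain E \<psi>"
    and Re_eq: "\<And>C. is_cycle E C \<Longrightarrow> Re (cycle_gain \<phi> C) = Re (cycle_gain \<psi> C)"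
  shows "char_poly (gain_adj_mat n E \<phi>) = char_poly (gain_adj_mat n E \<psi>)"
proof (rule char_poly_eq_if_Re_cyclic_products_eq)
  show "gain_adj_mat n E \<phi> $$ (j, i) = cnj (gain_adj_mat n E \<phi> $$ (i, j))"
    and "gain_adj_mat n E \<psi> $$ (j, i) = cnj (gain_adj_mat n E \<psi> $$ (i, j))"
    if "i < n" "j < n" for i j
    using gain_adj_mat_hermitian gain that by blast+
  show "gain_adj_mat n E \<phi> $$ (i, i) = gain_adj_mat n E \<psi> $$ (i, i)" if "i < n" for i
  proof -
    have "{i, i} \<notin> E"
      using simple_graph_edgeD[OF simple, of i i] by blast
    then show ?thesis
      using that by (simp add: gain_adj_mat_entry)
  qed
qed (use Re_cyclic_product_gain_adj_mat_eq[OF gain Re_eq] in \<open>auto simp: gain_adj_mat_def\<close>)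

lemma A_T_cycle_gain_eq:
  assumes "simple_graph n E" and "normal_spanning_tree n E ET rt"
    and "\<phi> \<in> A_T E ET rt r" and "\<phi>' \<in> A_T E ET rt r" and "is_cycle E C"
  shows "cycle_gain \<phi>' C = cycle_gain \<phi> C"
proof -
  interpret fund_cycle_gains_agree n E ET rt \<phi> \<phi>'
    using assms(1-4) by unfold_locales (auto simp: A_T_def)
  show ?thesis
    using assms(5) by (rule cycle_gain_eq)
qed

theorem lemma3p2:
  fixes n :: nat and E ET :: "nat set set" and rt :: nat
    and r s :: "nat set \<Rightarrow> real" and \<phi> \<psi> :: "nat \<Rightarrow> nat \<Rightarrow> complex"
  assumes "simple_graph n E"
    and "connected_on n E"
    and "normal_spanning_tree n E ET rt"
    and "\<forall>e \<in> E - ET. r e \<in> {0..<2*pi} \<and> s e \<in> {0..<2*pi}"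
    and "\<exists>e \<in> E - ET. r e \<noteq> s e"
    and "\<phi> \<in> A_T E ET rt r" and "\<psi> \<in> A_T E ET rt s"
    and "\<forall>C. is_cycle E C \<longrightarrow> Re (cycle_gain \<phi> C) = Re (cycle_gain \<psi> C)"
  shows "\<forall>\<phi>' \<in> A_T E ET rt r \<union> A_T E ET rt s. \<forall>\<psi>' \<in> A_T E ET rt r \<union> A_T E ET rt s.
           same_spectrum (gain_adj_mat n E \<phi>') (gain_adj_mat n E \<psi>')"
proof -
  note simple = assms(1) and normal = assms(3)
  have char_poly_eq: "char_poly (gain_adj_mat n E \<chi>) = char_poly (gain_adj_mat n E \<phi>)"
    if \<chi>: "\<chi> \<in> A_T E ET rt r \<union> A_T E ET rt s" for \<chi>
  proof (rule char_poly_gain_adj_mat_eq[OF simple])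
    show "gain E \<chi>" "gain E \<phi>"
      using \<chi> assms(6) by (auto simp: A_T_def)
    show "Re (cycle_gain \<chi> C) = Re (cycle_gain \<phi> C)" if "is_cycle E C" for C
      using \<chi> A_T_cycle_gain_eq[OF simple normal assms(6) _ that]
        A_T_cycle_gain_eq[OF simple normal assms(7) _ that] assms(8) that by auto
  qed
  show ?thesis
    using char_poly_eq by (simp add: same_spectrum_def gain_adj_mat_def)
qed

end
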